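(* Let $\mathbb{K}$ be a countable set, $m\ge2$ an even integer, $\mathcal{X}$ a nonempty set, and $(\phi_k)_{k\in\mathbb{K}}$ functions $\phi_k\colon\mathcal{X}\to\mathbb{R}$ with $(\phi_k(x))_{k\in\mathbb{K}}\in\ell^m(\mathbb{K})$ for every $x\in\mathcal{X}$. Let $K(x'_1,\dots,x'_m)=\sum_{k\in\mathbb{K}}\phi_k(x'_1)\cdots\phi_k(x'_m)$ and suppose that $K(x,\dots,x)>0$ for every $x\in\mathcal{X}$. Define $$\tilde K\colon\mathcal{X}^m\to\mathbb{R},\qquad \tilde K(x'_1,\dots,x'_m)=\frac{K(x'_1,\dots,x'_m)}{K(x'_1,\dots,x'_1)^{1/m}\cdots K(x'_m,\dots,x'_m)^{1/m}}.$$ Then there exists a family $(\tilde\phi_k)_{k\in\mathbb{K}}$ of functions $\tilde\phi_k\colon\mathcal{X}\to\mathbb{R}$ with $(\tilde\phi_k(x))_{k\in\mathbb{K}}\in\ell^m(\mathbb{K})$ for every $x$, such that $\tilde K(x'_1,\dots,x'_m)=\sum_{k\in\mathbb{K}}\tilde\phi_k(x'_1)\cdots\tilde\phi_k(x'_m)$ for all $(x'_1,\dots,x'_m)\in\mathcal{X}^m$; moreover (i) $\tilde K(x,\dots,x)=1$ for every $x\in\mathcal{X}$, and (ii) $|\tilde K(x'_1,\dots,x'_m)|\le1$ for every $(x'_1,\dots,x'_m)\in\mathcal{X}^m$.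
   Context: $\ell^m(\mathbb{K})$ is the space of real families with $\sum_k|w_k|^m<\infty$. *)

theory Defs
  imports "HOL-Analysis.Analysis"
begin

definition in_ellm :: "nat \<Rightarrow> ('k \<Rightarrow> real) \<Rightarrow> bool" where
  "in_ellm m w \<longleftrightarrow> (\<lambda>k. \<bar>w k\<bar> ^ m) summable_on UNIV"

text \<open>The m-point kernel K(x'_1,...,x'_m) = sum_k phi_k(x'_1) ... phi_k(x'_m);
  a tuple in X^m is a function xs with xs 0, ..., xs (m-1).\<close>
definition kernel :: "nat \<Rightarrow> ('k \<Rightarrow> 'x \<Rightarrow> real) \<Rightarrow> (nat \<Rightarrow> 'x) \<Rightarrow> real" where
  "kernel m phi xs = (\<Sum>\<^sub>\<infinity>k. (\<Prod>i<m. phi k (xs i)))"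

definition norm_kernel :: "nat \<Rightarrow> ('k \<Rightarrow> 'x \<Rightarrow> real) \<Rightarrow> (nat \<Rightarrow> 'x) \<Rightarrow> real" where
  "norm_kernel m phi xs =
     kernel m phi xs / (\<Prod>i<m. kernel m phi (\<lambda>_. xs i) powr (1 / real m))"

end

theory Submission
  imports Defs
begin

text \<open>Put psi_k(x) = phi_k(x) / K(x,...,x)^(1/m). Since m is even, K(x,...,x) is the sum of
  |phi_k(x)|^m, so each family (psi_k(x))_k has unit l^m-norm, and the normalized kernel is the
  kernel of the psi_k. By AM-GM, |psi_k(x_1) ... psi_k(x_m)| is at most the mean of the
  |psi_k(x_i)|^m, whose sum over k is 1; this yields both the summability of the products
  and the bound |K~| <= 1.\<close>

lemma has_sum_sum:
  fixes f :: "'i \<Rightarrow> 'k \<Rightarrow> real"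
  assumes "finite I" "\<And>i. i \<in> I \<Longrightarrow> (f i has_sum s i) A"
  shows "((\<lambda>k. \<Sum>i\<in>I. f i k) has_sum (\<Sum>i\<in>I. s i)) A"
  using assms by (induction I rule: finite_induct) (simp_all add: has_sum_add)

lemma powr_inverse_power:
  fixes x :: real
  assumes "x \<ge> 0" "n > 0"
  shows "(x ^ n) powr (1 / real n) = x"
proof (cases "x = 0")
  case False
  then have "x ^ n = x powr real n"
    using assms(1) by (simp add: powr_realpow)
  then show ?thesis
    using assms False by (simp add: powr_powr)
qed (use assms in simp)

lemma power_powr_inverse:
  fixes d :: real
  assumes "d > 0" "n > 0"
  shows "(d powr (1 / real n)) ^ n = d"
  using assms by (simp add: powr_power)

lemma abs_prod_le_mean_power:
  fixes a :: "nat \<Rightarrow> real"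
  assumes "n > 0"
  shows "\<bar>\<Prod>i<n. a i\<bar> \<le> (\<Sum>i<n. \<bar>a i\<bar> ^ n) / n"
proof -
  have "\<bar>\<Prod>i<n. a i\<bar> = ((\<Prod>i<n. \<bar>a i\<bar>) ^ n) powr (1 / n)"
    using assms by (simp add: abs_prod prod_nonneg powr_inverse_power)
  also have "\<dots> = (\<Prod>i<n. \<bar>a i\<bar> ^ n) powr (1 / card {..<n})"
    by (simp add: prod_power_distrib)
  also have "\<dots> \<le> (\<Sum>i<n. \<bar>a i\<bar> ^ n / card {..<n})"
    using assms by (intro arith_geom_mean) auto
  finally show ?thesis
    by (simp add: sum_divide_distrib)
qed

lemma
  fixes f :: "nat \<Rightarrow> 'k \<Rightarrow> real"
  assumes "n > 0" and power_sums: "\<And>i. i < n \<Longrightarrow> ((\<lambda>k. \<bar>f i k\<bar> ^ n) has_sum s i) A"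
  shows summable_on_prod_of_power_summable: "(\<lambda>k. \<Prod>i<n. f i k) summable_on A"
    and abs_infsum_prod_le_mean: "\<bar>\<Sum>\<^sub>\<infinity>k\<in>A. \<Prod>i<n. f i k\<bar> \<le> (\<Sum>i<n. s i) / n"
proof -
  define B where "B k = (\<Sum>i<n. \<bar>f i k\<bar> ^ n) / n" for k
  have B: "(B has_sum (\<Sum>i<n. s i) / n) A"
    unfolding B_def by (intro has_sum_divide_const has_sum_sum) (auto intro: power_sums)
  have bound: "\<bar>\<Prod>i<n. f i k\<bar> \<le> B k" for k
    unfolding B_def by (rule abs_prod_le_mean_power[OF \<open>n > 0\<close>])
  have "(\<lambda>k. \<bar>\<Prod>i<n. f i k\<bar>) summable_on A"
    using has_sum_imp_summable[OF B] by (rule summable_on_comparison_test) (simp_all add: bound)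
  then show summable: "(\<lambda>k. \<Prod>i<n. f i k) summable_on A"
    by (simp add: abs_summable_summable)
  show "\<bar>\<Sum>\<^sub>\<infinity>k\<in>A. \<Prod>i<n. f i k\<bar> \<le> (\<Sum>i<n. s i) / n"
    using norm_infsum_le[OF summable[unfolded summable_iff_has_sum_infsum] B] by (simp add: bound)
qed

lemma has_sum_power_diagonal_kernel:
  assumes "even m" "in_ellm m (\<lambda>k. phi k x)"
  shows "((\<lambda>k. \<bar>phi k x\<bar> ^ m) has_sum kernel m phi (\<lambda>_. x)) UNIV"
  using assms by (simp add: in_ellm_def kernel_def power_even_abs)

lemma has_sum_power_normalized:
  fixes w :: "'k \<Rightarrow> real"
  assumes "((\<lambda>k. \<bar>w k\<bar> ^ m) has_sum d) A" "d > 0" "m > 0"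
  shows "((\<lambda>k. \<bar>w k / d powr (1 / real m)\<bar> ^ m) has_sum 1) A"
proof -
  have "((\<lambda>k. \<bar>w k\<bar> ^ m / d) has_sum d / d) A"
    using assms(1) by (rule has_sum_divide_const)
  then show ?thesis
    using assms(2,3) by (simp add: power_divide power_powr_inverse)
qed

lemma has_sum_kernel_rescaled:
  fixes phi :: "'k \<Rightarrow> 'x \<Rightarrow> real"
  assumes "(\<lambda>k. \<Prod>i<m. phi k (xs i) / c (xs i)) summable_on UNIV"
    and "\<And>i. i < m \<Longrightarrow> c (xs i) \<noteq> 0"
  shows "((\<lambda>k. \<Prod>i<m. phi k (xs i) / c (xs i))
           has_sum kernel m phi xs / (\<Prod>i<m. c (xs i))) UNIV"
proof -
  have rescaled: "(\<Prod>i<m. phi k (xs i) / c (xs i)) = (\<Prod>i<m. phi k (xs i)) / (\<Prod>i<m. c (xs i))"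
    for k by (simp add: prod_dividef)
  have "(\<lambda>k. (\<Prod>i<m. phi k (xs i) / c (xs i)) * (\<Prod>i<m. c (xs i))) summable_on UNIV"
    using assms(1) by (rule summable_on_cmult_left)
  then have "(\<lambda>k. \<Prod>i<m. phi k (xs i)) summable_on UNIV"
    using assms(2) by (simp add: rescaled)
  then have "((\<lambda>k. \<Prod>i<m. phi k (xs i)) has_sum kernel m phi xs) UNIV"
    by (simp add: kernel_def)
  then show ?thesis
    unfolding rescaled by (rule has_sum_divide_const)
qed

theorem proposition4p5:
  fixes phi :: "'k::countable \<Rightarrow> 'x \<Rightarrow> real" and X :: "'x set" and m :: nat
  assumes "even m" and "m \<ge> 2" and "X \<noteq> {}"
    and "\<And>x. x \<in> X \<Longrightarrow> in_ellm m (\<lambda>k. phi k x)"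
    and "\<And>x. x \<in> X \<Longrightarrow> kernel m phi (\<lambda>_. x) > 0"
  shows "\<exists>psi :: 'k \<Rightarrow> 'x \<Rightarrow> real.
           (\<forall>x\<in>X. in_ellm m (\<lambda>k. psi k x)) \<and>
           (\<forall>xs. (\<forall>i<m. xs i \<in> X) \<longrightarrow>
              ((\<lambda>k. \<Prod>i<m. psi k (xs i)) has_sum norm_kernel m phi xs) UNIV) \<and>
           (\<forall>x\<in>X. norm_kernel m phi (\<lambda>_. x) = 1) \<and>
           (\<forall>xs. (\<forall>i<m. xs i \<in> X) \<longrightarrow> \<bar>norm_kernel m phi xs\<bar> \<le> 1)"
proof -
  have "m > 0" using \<open>m \<ge> 2\<close> by simp
  define c where "c x = kernel m phi (\<lambda>_. x) powr (1 / real m)" for x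
  define psi where "psi k x = phi k x / c x" for k x
  have unit: "((\<lambda>k. \<bar>psi k x\<bar> ^ m) has_sum 1) UNIV" if "x \<in> X" for x
    unfolding psi_def c_def using \<open>m > 0\<close> assms(1,4,5) that
    by (intro has_sum_power_normalized has_sum_power_diagonal_kernel) auto
  have c_pos: "c x > 0" if "x \<in> X" for x
    using assms(5)[OF that] by (simp add: c_def)
  have rescaled: "((\<lambda>k. \<Prod>i<m. psi k (xs i)) has_sum norm_kernel m phi xs) UNIV"
    and bounded: "\<bar>norm_kernel m phi xs\<bar> \<le> 1" if "\<forall>i<m. xs i \<in> X" for xs
  proof -
    have "(\<lambda>k. \<Prod>i<m. psi k (xs i)) summable_on UNIV"
      using \<open>m > 0\<close> that unit by (intro summable_on_prod_of_power_summable) auto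
    then show has_sum: "((\<lambda>k. \<Prod>i<m. psi k (xs i)) has_sum norm_kernel m phi xs) UNIV"
      using that c_pos unfolding psi_def norm_kernel_def c_def[symmetric]
      by (intro has_sum_kernel_rescaled) (auto simp: less_le)
    have "\<bar>\<Sum>\<^sub>\<infinity>k. \<Prod>i<m. psi k (xs i)\<bar> \<le> (\<Sum>i<m. 1) / m"
      using \<open>m > 0\<close> that unit by (intro abs_infsum_prod_le_mean) auto
    then show "\<bar>norm_kernel m phi xs\<bar> \<le> 1"
      using \<open>m > 0\<close> has_sum by (simp add: infsumI)
  qed
  have "norm_kernel m phi (\<lambda>_. x) = 1" if "x \<in> X" for x
    using assms(5)[OF that] \<open>m > 0\<close> by (simp add: norm_kernel_def power_powr_inverse)
  moreover have "in_ellm m (\<lambda>k. psi k x)" if "x \<in> X" for x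
    using unit[OF that] by (auto simp: in_ellm_def dest: has_sum_imp_summable)
  ultimately show ?thesis
    using rescaled bounded by blast
qed

end
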